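(* Let $\Sigma$ be a set and let $y,z\in F(\Sigma)$ be such that the word $y^{-1}zy$ is freely reduced and non-trivial, with $z$ cyclically reduced and not a proper power. Then: (1) if $y=1$ and there are $i\in\mathbb{Z}$ and $g,h\in F(\Sigma)$ such that $z^i=gzh$ with the word $g\cdot z\cdot h$ freely reduced, then $i\geq 1$ and $g,h\in\langle z\rangle$; (2) if $y\neq 1$ and there are $i,j\in\mathbb{Z}$ and $g,h\in F(\Sigma)$ such that $y^{-1}z^iy=gy^{-1}z^jyh$ with the word $g\cdot y^{-1}z^jy\cdot h$ freely reduced, then $g=h=1$ and $i=j$.
   Context: $F(\Sigma)$ is the free group on $\Sigma$. An element $w$ is a proper power if $w=u^n$ for some $u\in F(\Sigma)$ and $n\geq 2$. *)

theory Defs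
  imports Main
begin

text \<open>Free group F(S) over the generators of type 'a, with elements represented by
  freely reduced words. A letter is a pair (b, a): (False, a) is the generator a,
  (True, a) its inverse.\<close>

type_synonym 'a letter = "bool \<times> 'a"
type_synonym 'a word = "'a letter list"

definition inv_letter :: "'a letter \<Rightarrow> 'a letter" where
  "inv_letter x = (\<not> fst x, snd x)"

fun reduced :: "'a word \<Rightarrow> bool" where
  "reduced [] = True"
| "reduced [x] = True"
| "reduced (x # y # ys) = (y \<noteq> inv_letter x \<and> reduced (y # ys))"

definition inv_word :: "'a word \<Rightarrow> 'a word" where
  "inv_word w = rev (map inv_letter w)"

fun cancel :: "'a letter \<Rightarrow> 'a word \<Rightarrow> 'a word" where
  "cancel x [] = [x]"
| "cancel x (y # ys) = (if y = inv_letter x then ys else x # y # ys)"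

fun reduce :: "'a word \<Rightarrow> 'a word" where
  "reduce [] = []"
| "reduce (x # w) = cancel x (reduce w)"

definition free_group :: "'a word set" where
  "free_group = {w. reduced w}"

definition fmult :: "'a word \<Rightarrow> 'a word \<Rightarrow> 'a word" where
  "fmult u v = reduce (u @ v)"

definition fpow :: "'a word \<Rightarrow> int \<Rightarrow> 'a word" where
  "fpow w i = (if 0 \<le> i then reduce (concat (replicate (nat i) w))
               else reduce (concat (replicate (nat (- i)) (inv_word w))))"

definition cyclically_reduced :: "'a word \<Rightarrow> bool" where
  "cyclically_reduced w \<longleftrightarrow> reduced w \<and> (w = [] \<or> hd w \<noteq> inv_letter (last w))"

definition proper_power :: "'a word \<Rightarrow> bool" where
  "proper_power w \<longleftrightarrow> (\<exists>u n. u \<in> free_group \<and> n \<ge> 2 \<and> w = fpow u (int n))"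

definition cyclic_subgroup :: "'a word \<Rightarrow> 'a word set" where
  "cyclic_subgroup w = range (fpow w)"

end

theory Submission
  imports Defs
begin

(* A cyclically reduced word z that is not a proper power is primitive as a list, so z occurs in a
   power z^n only at multiples of its length, while z^-1 does not occur in it at all: such an
   occurrence would make a nonempty suffix of z equal to its own inverse, which no reduced word is. In (2) both sides are reduced words; if g were nonempty, the first
   factor z^(+-1) of z^j on the right would lie inside z^i on the left at a multiple of |z|, so the
   last letter of y^-1 would be the last letter of z^(+-1), contradicting the reducedness of
   y^-1 z y. Inverting both sides gives h = 1 in the same way, and i = j because n |-> z^n is
   injective for cyclically reduced z. *)

lemma inv_letter_inv_letter [simp]: "inv_letter (inv_letter x) = x"
  by (simp add: inv_letter_def)

lemma inv_letter_neq_self [simp]: "inv_letter x \<noteq> x"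
  by (cases x) (simp add: inv_letter_def)

lemma reduced_Cons: "reduced (x # xs) \<longleftrightarrow> reduced xs \<and> (xs \<noteq> [] \<longrightarrow> hd xs \<noteq> inv_letter x)"
  by (cases xs) auto

lemma reduced_append:
  "reduced (xs @ ys) \<longleftrightarrow>
     reduced xs \<and> reduced ys \<and> (xs \<noteq> [] \<longrightarrow> ys \<noteq> [] \<longrightarrow> hd ys \<noteq> inv_letter (last xs))"
  by (induction xs) (auto simp: reduced_Cons)

lemma inv_word_Nil [simp]: "inv_word [] = []"
  and inv_word_Cons [simp]: "inv_word (x # xs) = inv_word xs @ [inv_letter x]"
  and inv_word_append [simp]: "inv_word (xs @ ys) = inv_word ys @ inv_word xs"
  and inv_word_inv_word [simp]: "inv_word (inv_word xs) = xs"
  and length_inv_word [simp]: "length (inv_word xs) = length xs"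
  and inv_word_eq_Nil_iff [simp]: "inv_word xs = [] \<longleftrightarrow> xs = []"
  by (simp_all add: inv_word_def rev_map comp_def)

lemma hd_inv_word: "xs \<noteq> [] \<Longrightarrow> hd (inv_word xs) = inv_letter (last xs)"
  by (simp add: inv_word_def hd_rev last_map)

lemma last_inv_word: "xs \<noteq> [] \<Longrightarrow> last (inv_word xs) = inv_letter (hd xs)"
  by (simp add: inv_word_def last_rev hd_map)

lemma reduced_inv_word: "reduced xs \<Longrightarrow> reduced (inv_word xs)"
  by (induction xs) (auto simp: reduced_Cons reduced_append last_inv_word)

lemma reduced_inv_word_append_self_iff: "reduced (inv_word y @ y) \<longleftrightarrow> y = []"
  by (auto simp: reduced_append last_inv_word)

lemma reduced_inv_word_eq_self_imp_Nil:
  assumes "reduced w" and "inv_word w = w"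
  shows "w = []"
  using assms
proof (induction w rule: length_induct)
  case (1 w)
  show ?case
  proof (rule ccontr)
    assume "w \<noteq> []"
    then obtain a v where w: "w = a # v" by (cases w) auto
    with "1.prems"(2) have "v \<noteq> []" by auto
    then obtain m b where "v = m @ [b]" by (cases v rule: rev_cases) auto
    with w "1.prems" have b: "b = inv_letter a" and m: "inv_word m = m" "reduced m"
      by (auto simp: reduced_Cons reduced_append)
    from "1.IH" m w \<open>v = m @ [b]\<close> have "m = []" by simp
    with w b \<open>v = m @ [b]\<close> "1.prems"(1) show False by simp
  qed
qed

lemma reduced_cancel: "reduced w \<Longrightarrow> reduced (cancel x w)"
  by (cases w) (auto simp: reduced_Cons)

lemma reduced_reduce: "reduced (reduce w)"
  by (induction w) (auto simp: reduced_cancel)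

lemma cancel_reduced: "reduced (x # w) \<Longrightarrow> cancel x w = x # w"
  by (cases w) auto

lemma reduce_reduced: "reduced w \<Longrightarrow> reduce w = w"
  by (induction w) (auto simp: reduced_Cons cancel_reduced)

lemma cancel_cancel_inv_letter: "reduced w \<Longrightarrow> cancel x (cancel (inv_letter x) w) = w"
  by (cases w) (auto simp: cancel_reduced)

lemma reduce_Cons_inv_letter: "reduce (x # inv_letter x # w) = reduce w"
  by (simp add: cancel_cancel_inv_letter reduced_reduce)

lemma reduce_append_reduce: "reduce (u @ reduce v) = reduce (u @ v)"
  by (induction u) (auto simp: reduce_reduced reduced_reduce)

lemma reduce_cancel_append: "reduce (cancel x w @ v) = reduce (x # w @ v)"
  by (cases w) (auto simp: reduce_Cons_inv_letter[of x, simplified])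

lemma reduce_reduce_append: "reduce (reduce u @ v) = reduce (u @ v)"
  by (induction u) (simp_all add: reduce_cancel_append)

lemma reduce_append_Cons_inv_letter: "reduce (u @ x # inv_letter x # v) = reduce (u @ v)"
  by (metis reduce_append_reduce reduce_Cons_inv_letter)

lemma reduce_inv_word_append_self: "reduce (inv_word y @ y) = []"
proof (induction y)
  case (Cons x y)
  then show ?case
    using reduce_append_Cons_inv_letter[of "inv_word y" "inv_letter x" y] by simp
qed simp

lemma length_concat_replicate [simp]: "length (concat (replicate n w)) = n * length w"
  by (induction n) auto

lemma concat_replicate_append_self: "concat (replicate n w) @ w = w @ concat (replicate n w)"
  by (induction n) simp_all

lemma inv_word_concat_replicate: "inv_word (concat (replicate n w)) = concat (replicate n (inv_word w))"
  by (induction n) (simp_all add: concat_replicate_append_self)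

lemma nth_concat_replicate:
  "i < n * length w \<Longrightarrow> concat (replicate n w) ! i = w ! (i mod length w)"
proof (induction n arbitrary: i)
  case (Suc n)
  then show ?case
    by (cases "i < length w") (auto simp: nth_append le_mod_geq)
qed simp

lemma cyclically_reduced_inv_word: "cyclically_reduced w \<Longrightarrow> cyclically_reduced (inv_word w)"
  by (auto simp: cyclically_reduced_def reduced_inv_word hd_inv_word last_inv_word)

lemma reduced_concat_replicate:
  assumes "cyclically_reduced w"
  shows "reduced (concat (replicate n w))"
proof (induction n)
  case (Suc n)
  with assms show ?case
    by (cases n) (auto simp: cyclically_reduced_def reduced_append)
qed simp

lemma fpow_cyclically_reduced:
  assumes "cyclically_reduced z"
  shows "fpow z i = concat (replicate (nat \<bar>i\<bar>) (if 0 \<le> i then z else inv_word z))"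
  using reduce_reduced[OF reduced_concat_replicate[OF assms]]
    reduce_reduced[OF reduced_concat_replicate[OF cyclically_reduced_inv_word[OF assms]]]
  by (simp add: fpow_def)

lemma fpow_of_nat: "cyclically_reduced z \<Longrightarrow> fpow z (int n) = concat (replicate n z)"
  by (simp add: fpow_cyclically_reduced)

lemma inv_word_fpow: "cyclically_reduced z \<Longrightarrow> inv_word (fpow z i) = fpow z (- i)"
  by (simp add: fpow_cyclically_reduced inv_word_concat_replicate)

lemma take_length_fpow:
  assumes "cyclically_reduced z" and "i \<noteq> 0"
  shows "take (length z) (fpow z i) = (if 0 \<le> i then z else inv_word z)"
proof -
  obtain n where "nat \<bar>i\<bar> = Suc n" using assms(2) by (cases "nat \<bar>i\<bar>") auto
  then show ?thesis by (simp add: fpow_cyclically_reduced[OF assms(1)])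
qed

lemma fpow_inject:
  assumes "cyclically_reduced z" and "z \<noteq> []" and "fpow z i = fpow z j"
  shows "i = j"
proof (rule ccontr)
  assume "i \<noteq> j"
  have "nat \<bar>i\<bar> * length z = nat \<bar>j\<bar> * length z"
    using arg_cong[OF assms(3), of length]
    by (simp add: fpow_cyclically_reduced[OF assms(1)] split: if_splits)
  with assms(2) \<open>i \<noteq> j\<close> have "j = - i" and "i \<noteq> 0" by auto
  then have "z = inv_word z"
    using take_length_fpow[OF assms(1), of i] take_length_fpow[OF assms(1), of j] assms(3)
    by (auto split: if_splits)
  with assms(1,2) show False
    using reduced_inv_word_eq_self_imp_Nil by (force simp: cyclically_reduced_def)
qed

definition primitive :: "'a list \<Rightarrow> bool" where
  "primitive w \<longleftrightarrow> (\<forall>r n. concat (replicate n r) = w \<longrightarrow> n \<le> 1)"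

lemma primitive_not_Nil: "primitive w \<Longrightarrow> w \<noteq> []"
  unfolding primitive_def using concat_replicate_trivial[of 2] by fastforce

lemma primitive_append_commute:
  assumes "primitive (u @ v)" and "u @ v = v @ u"
  shows "u = [] \<or> v = []"
  using comm_append_is_replicate[OF _ _ assms(2)] assms(1) by (force simp: primitive_def)

lemma primitive_inv_word: "primitive w \<Longrightarrow> primitive (inv_word w)"
  unfolding primitive_def by (metis inv_word_concat_replicate inv_word_inv_word)

lemma not_proper_power_imp_primitive:
  assumes "reduced z" and "\<not> proper_power z"
  shows "primitive z"
  unfolding primitive_def
proof (intro allI impI)
  fix r n assume z: "concat (replicate n r) = z"
  show "n \<le> 1"
  proof (rule ccontr)
    assume "\<not> n \<le> 1"
    then obtain m where n: "n = Suc m" and "2 \<le> n" by (cases n) auto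
    from z[symmetric] n assms(1) have "reduced r" by (simp add: reduced_append)
    moreover have "fpow r (int n) = z"
      using z assms(1) by (simp add: fpow_def reduce_reduced)
    ultimately have "proper_power z"
      using \<open>2 \<le> n\<close> unfolding proper_power_def free_group_def by blast
    with assms(2) show False ..
  qed
qed

lemma factor_of_concat_replicate:
  assumes eq: "concat (replicate p w) = A @ X @ B" and len: "length X = length w" and "w \<noteq> []"
  shows "\<exists>k u v. w = u @ v \<and> v \<noteq> [] \<and> X = v @ u \<and> A = concat (replicate k w) @ u"
proof -
  let ?m = "length w"
  define k where "k = length A div ?m"
  define r where "r = length A mod ?m"
  define u where "u = take r w"
  define v where "v = drop r w"
  have "0 < ?m" using \<open>w \<noteq> []\<close> by simp
  then have r: "r < ?m" and A: "length A = k * ?m + r"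
    by (simp_all add: r_def k_def)
  have periodic: "(A @ X) ! t = w ! (t mod ?m)" if "t < length A + ?m" for t
  proof -
    have "length A + ?m \<le> p * ?m" using arg_cong[OF eq, of length] len by simp
    with that have "concat (replicate p w) ! t = w ! (t mod ?m)"
      by (simp add: nth_concat_replicate)
    with that eq len show ?thesis by (auto simp: nth_append split: if_splits)
  qed
  have "X = v @ u"
  proof (rule nth_equalityI)
    fix t assume "t < length X"
    then have "X ! t = w ! ((r + t) mod ?m)"
      using periodic[of "length A + t"] len A by (simp add: nth_append add.assoc)
    also have "\<dots> = (v @ u) ! t"
      using \<open>t < length X\<close> len r
      by (auto simp: u_def v_def nth_append le_mod_geq add.commute)
    finally show "X ! t = (v @ u) ! t" .
  qed (simp add: len u_def v_def r less_imp_le)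
  moreover have "A = concat (replicate k w) @ u"
  proof (rule nth_equalityI)
    fix t assume "t < length A"
    show "A ! t = (concat (replicate k w) @ u) ! t"
    proof (cases "t < k * ?m")
      case False
      then obtain d where "t = k * ?m + d" by (metis le_add_diff_inverse not_less)
      with \<open>t < length A\<close> periodic[of t] A r show ?thesis by (simp add: nth_append u_def)
    qed (use \<open>t < length A\<close> periodic[of t] A in \<open>simp add: nth_append nth_concat_replicate\<close>)
  qed (simp add: A u_def r less_imp_le)
  moreover have "w = u @ v" and "v \<noteq> []" using r by (simp_all add: u_def v_def)
  ultimately show ?thesis by blast
qed

lemma primitive_factor_of_concat_replicate:
  assumes "primitive w" and "concat (replicate p w) = A @ w @ B"
  shows "\<exists>k. A = concat (replicate k w)"
proof -
  obtain k u v where "w = u @ v" "v \<noteq> []" "w = v @ u" "A = concat (replicate k w) @ u"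
    using factor_of_concat_replicate[OF assms(2)] primitive_not_Nil[OF assms(1)] by blast
  with assms(1) show ?thesis by (metis append_Nil2 primitive_append_commute)
qed

lemma inv_word_not_factor_of_concat_replicate:
  assumes "reduced w" and "w \<noteq> []"
  shows "concat (replicate p w) \<noteq> A @ inv_word w @ B"
proof
  assume "concat (replicate p w) = A @ inv_word w @ B"
  from factor_of_concat_replicate[OF this length_inv_word assms(2)]
  obtain u v where "w = u @ v" and "v \<noteq> []" and "inv_word w = v @ u" by blast
  then have "inv_word v @ inv_word u = v @ u" by simp
  then have "inv_word v = v" using append_eq_append_conv[of "inv_word v" v] by simp
  moreover have "reduced v" using assms(1) \<open>w = u @ v\<close> by (simp add: reduced_append)
  ultimately show False using reduced_inv_word_eq_self_imp_Nil \<open>v \<noteq> []\<close> by blast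
qed

lemma fpow_eq_append_imp_cyclic_subgroup:
  assumes cz: "cyclically_reduced z" and pz: "primitive z" and eq: "fpow z i = g @ z @ h"
  shows "1 \<le> i \<and> g \<in> cyclic_subgroup z \<and> h \<in> cyclic_subgroup z"
proof -
  have "z \<noteq> []" using primitive_not_Nil[OF pz] .
  have "0 \<le> i"
  proof (rule ccontr)
    assume "\<not> 0 \<le> i"
    with eq have "concat (replicate (nat \<bar>i\<bar>) (inv_word z)) = g @ inv_word (inv_word z) @ h"
      by (simp add: fpow_cyclically_reduced[OF cz])
    with cz \<open>z \<noteq> []\<close> show False
      using inv_word_not_factor_of_concat_replicate[of "inv_word z"]
      by (simp add: cyclically_reduced_def reduced_inv_word)
  qed
  define n where "n = nat i"
  with eq \<open>0 \<le> i\<close> have zn: "concat (replicate n z) = g @ z @ h"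
    by (simp add: fpow_cyclically_reduced[OF cz])
  then obtain k where g: "g = concat (replicate k z)"
    using primitive_factor_of_concat_replicate[OF pz] by blast
  have "Suc k * length z \<le> n * length z"
    using arg_cong[OF zn, of length] g by simp
  then have "Suc k \<le> n" using \<open>z \<noteq> []\<close> by (simp only: mult_le_cancel2) simp
  then have "concat (replicate n z) = g @ z @ concat (replicate (n - Suc k) z)"
    using g replicate_add[of "Suc k" "n - Suc k" z] by (simp add: concat_replicate_append_self)
  with zn have h: "h = concat (replicate (n - Suc k) z)" by simp
  have "\<And>m. concat (replicate m z) \<in> cyclic_subgroup z"
    by (metis cyclic_subgroup_def fpow_of_nat[OF cz] rangeI)
  with g h \<open>Suc k \<le> n\<close> n_def show ?thesis by auto
qed

lemma reduced_conjugate_inv_word: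
  "reduced (inv_word y @ z @ y) \<Longrightarrow> reduced (inv_word y @ inv_word z @ y)"
  using reduced_inv_word[of "inv_word y @ z @ y"] by simp

lemma reduced_conjugate_fpow:
  assumes red: "reduced (inv_word y @ z @ y)" and cz: "cyclically_reduced z" and "i \<noteq> 0"
  shows "reduced (inv_word y @ fpow z i @ y)"
proof -
  have pos: "reduced (inv_word y @ fpow z i @ y)" if "0 < i" for i
  proof (cases "z = []")
    case True
    with red show ?thesis by (simp add: fpow_def)
  next
    case False
    obtain m where "nat \<bar>i\<bar> = Suc m" using \<open>0 < i\<close> by (cases "nat \<bar>i\<bar>") auto
    then have "fpow z i = z @ concat (replicate m z)" "fpow z i = concat (replicate m z) @ z"
      using \<open>0 < i\<close> by (simp_all add: fpow_cyclically_reduced[OF cz] concat_replicate_append_self)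
    with False have "fpow z i \<noteq> []" "hd (fpow z i) = hd z" "last (fpow z i) = last z"
      by (metis append_is_Nil_conv, metis hd_append2, metis last_appendR)
    moreover have "reduced (fpow z i)"
      using \<open>0 < i\<close> reduced_concat_replicate[OF cz] by (simp add: fpow_cyclically_reduced[OF cz])
    ultimately show ?thesis
      using red False by (simp add: reduced_append hd_append last_append)
  qed
  show ?thesis
  proof (cases "0 < i")
    case False
    with \<open>i \<noteq> 0\<close> have "reduced (inv_word y @ fpow z (- i) @ y)" by (intro pos) simp
    then show ?thesis using reduced_inv_word inv_word_fpow[OF cz, of "- i"] by fastforce
  qed (rule pos)
qed

lemma conjugate_power_eq_append_imp_Nil:
  assumes y: "y \<noteq> []" and red: "reduced (inv_word y @ w @ y)"
    and pw: "primitive w" and rw: "reduced w" and w': "w' = w \<or> w' = inv_word w"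
    and eq: "inv_word y @ concat (replicate n w) @ y = g @ inv_word y @ w' @ R"
    and len: "length (g @ w') \<le> length (concat (replicate n w))"
  shows "g = []"
proof (rule ccontr)
  assume "g \<noteq> []"
  have "w \<noteq> []" using primitive_not_Nil[OF pw] .
  define A where "A = drop (length y) (g @ inv_word y)"
  have "length A = length g" by (simp add: A_def)
  have "concat (replicate n w) @ y = (A @ w') @ R"
    using arg_cong[OF eq, of "drop (length y)"] by (simp add: A_def)
  then have "take (length (A @ w')) (concat (replicate n w) @ y) = A @ w'" by simp
  with len \<open>length A = length g\<close>
  have "take (length (A @ w')) (concat (replicate n w)) = A @ w'" by simp
  then obtain B where B: "concat (replicate n w) = A @ w' @ B"
    by (metis append_take_drop_id append.assoc)
  with w' have "w' = w"
    using inv_word_not_factor_of_concat_replicate[OF rw \<open>w \<noteq> []\<close>] by blast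
  with B obtain k where "A = concat (replicate k w)"
    using primitive_factor_of_concat_replicate[OF pw] by blast
  moreover have "A \<noteq> []" using \<open>length A = length g\<close> \<open>g \<noteq> []\<close> by auto
  ultimately obtain k' where "A = concat (replicate (Suc k') w)"
    by (cases k) auto
  then have "last A = last w"
    using \<open>w \<noteq> []\<close> by (simp add: concat_replicate_append_self[symmetric])
  moreover have "last A = last (g @ inv_word y)"
    unfolding A_def using \<open>g \<noteq> []\<close> by (intro last_drop) simp
  ultimately have "inv_letter (hd y) = last w"
    using y by (simp add: last_inv_word)
  then have "hd y = inv_letter (last w)" by (metis inv_letter_inv_letter)
  with red y \<open>w \<noteq> []\<close> show False by (simp add: reduced_append)
qed

lemma conjugate_fpow_eq_append_imp_Nil:
  assumes y: "y \<noteq> []" and red: "reduced (inv_word y @ z @ y)"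
    and cz: "cyclically_reduced z" and pz: "primitive z" and "j \<noteq> 0"
    and eq: "inv_word y @ fpow z i @ y = g @ inv_word y @ fpow z j @ y @ h"
  shows "g = []"
proof -
  define w where "w = (if 0 \<le> i then z else inv_word z)"
  define w' where "w' = (if 0 \<le> j then z else inv_word z)"
  obtain m where m: "nat \<bar>j\<bar> = Suc m" using \<open>j \<noteq> 0\<close> by (cases "nat \<bar>j\<bar>") auto
  have fpow_i: "fpow z i = concat (replicate (nat \<bar>i\<bar>) w)"
    and fpow_j: "fpow z j = w' @ concat (replicate m w')"
    using m by (simp_all add: w_def w'_def fpow_cyclically_reduced[OF cz])
  have "length (g @ w') \<le> length (concat (replicate (nat \<bar>i\<bar>) w))"
    using arg_cong[OF eq, of length] by (simp add: fpow_i fpow_j)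
  moreover have "primitive w" "reduced w" "reduced (inv_word y @ w @ y)"
    using pz cz red by (auto simp: w_def primitive_inv_word cyclically_reduced_def
        reduced_inv_word reduced_conjugate_inv_word)
  moreover have "w' = w \<or> w' = inv_word w" by (auto simp: w_def w'_def)
  ultimately show ?thesis
    using conjugate_power_eq_append_imp_Nil[OF y] eq by (simp add: fpow_i fpow_j)
qed

lemma fmult_fmult_reduced: "reduced (u @ v @ w) \<Longrightarrow> fmult (fmult u v) w = u @ v @ w"
  by (simp add: fmult_def reduce_reduce_append reduce_reduced)

lemma conjugate_fpow_factorization:
  assumes y: "y \<noteq> []" and red: "reduced (inv_word y @ z @ y)"
    and cz: "cyclically_reduced z" and pz: "primitive z"
    and eq: "fmult (fmult (inv_word y) (fpow z i)) y =
               fmult (fmult (fmult (fmult g (inv_word y)) (fpow z j)) y) h"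
    and red': "reduced (g @ inv_word y @ fpow z j @ y @ h)"
  shows "g = [] \<and> h = [] \<and> i = j"
proof -
  have rhs: "fmult (fmult (fmult (fmult g (inv_word y)) (fpow z j)) y) h =
      g @ inv_word y @ fpow z j @ y @ h"
    using red' by (simp add: fmult_def reduce_reduce_append reduce_reduced)
  have "j \<noteq> 0"
  proof
    assume "j = 0"
    with red' have "reduced (inv_word y @ y)" by (simp add: fpow_def reduced_append)
    with y show False by (simp add: reduced_inv_word_append_self_iff)
  qed
  have "i \<noteq> 0"
  proof
    assume "i = 0"
    with eq rhs y show False
      by (simp add: fpow_def fmult_def reduce_reduce_append reduce_inv_word_append_self)
  qed
  with eq rhs have eq': "inv_word y @ fpow z i @ y = g @ inv_word y @ fpow z j @ y @ h"
    using reduced_conjugate_fpow[OF red cz] by (simp add: fmult_fmult_reduced)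
  have "g = []"
    using conjugate_fpow_eq_append_imp_Nil[OF y red cz pz \<open>j \<noteq> 0\<close> eq'] .
  moreover have "inv_word h = []"
    using arg_cong[OF eq', of inv_word] \<open>j \<noteq> 0\<close>
      conjugate_fpow_eq_append_imp_Nil[OF y red cz pz, of "- j" "- i" "inv_word h" "inv_word g"]
    by (simp add: inv_word_fpow[OF cz])
  ultimately have "fpow z i = fpow z j" using eq' by simp
  then have "i = j" using fpow_inject[OF cz primitive_not_Nil[OF pz]] by blast
  with \<open>g = []\<close> \<open>inv_word h = []\<close> show ?thesis by simp
qed

theorem lemma2p1:
  fixes y z :: "'a word"
  assumes "y \<in> free_group" and "z \<in> free_group"
    and "reduced (inv_word y @ z @ y)" and "inv_word y @ z @ y \<noteq> []"
    and "cyclically_reduced z" and "\<not> proper_power z"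
  shows "(y = [] \<longrightarrow>
            (\<forall>(i::int) g h. g \<in> free_group \<and> h \<in> free_group \<and>
               fpow z i = fmult (fmult g z) h \<and> reduced (g @ z @ h)
               \<longrightarrow> i \<ge> 1 \<and> g \<in> cyclic_subgroup z \<and> h \<in> cyclic_subgroup z))
       \<and> (y \<noteq> [] \<longrightarrow>
            (\<forall>(i::int) (j::int) g h. g \<in> free_group \<and> h \<in> free_group \<and>
               fmult (fmult (inv_word y) (fpow z i)) y =
                 fmult (fmult (fmult (fmult g (inv_word y)) (fpow z j)) y) h \<and>
               reduced (g @ inv_word y @ fpow z j @ y @ h)
               \<longrightarrow> g = [] \<and> h = [] \<and> i = j))"
proof -
  have pz: "primitive z"
    using assms(2,6) by (simp add: free_group_def not_proper_power_imp_primitive)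
  show ?thesis
  proof (rule conjI; intro impI allI; elim conjE)
    fix i :: int and g h
    assume "fpow z i = fmult (fmult g z) h" and "reduced (g @ z @ h)"
    then show "i \<ge> 1 \<and> g \<in> cyclic_subgroup z \<and> h \<in> cyclic_subgroup z"
      using fpow_eq_append_imp_cyclic_subgroup[OF assms(5) pz] by (simp add: fmult_fmult_reduced)
  next
    fix i j :: int and g h
    assume "y \<noteq> []"
      and "fmult (fmult (inv_word y) (fpow z i)) y =
             fmult (fmult (fmult (fmult g (inv_word y)) (fpow z j)) y) h"
      and "reduced (g @ inv_word y @ fpow z j @ y @ h)"
    then show "g = [] \<and> h = [] \<and> i = j"
      using conjugate_fpow_factorization[OF _ assms(3,5) pz] by blast
  qed
qed

end
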